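(* If $H$ is a non-complete graph that has a universal vertex (a vertex adjacent to all other vertices), then $H$ is not an $\operatorname{IR}$-graph.
   Context: All graphs are finite and simple. For $G=(V,E)$, $D\subseteq V$, $v\in D$: $\operatorname{PN}(v,D)=N[v]-N[D-\{v\}]$ (closed neighbourhoods). $D$ is irredundant if $\operatorname{PN}(v,D)\neq\varnothing$ for all $v\in D$; $\operatorname{IR}(G)$ is the maximum size of an irredundant set; an $\operatorname{IR}(G)$-set is an irredundant set of that size. $G(\operatorname{IR})$ has the $\operatorname{IR}(G)$-sets as vertices, with $D\sim D'$ iff there exist $u\in D$, $v\in D'$ with $uv\in E(G)$ and $D'=(D-\{u\})\cup\{v\}$. A graph $H$ is an $\operatorname{IR}$-graph if $H\cong G(\operatorname{IR})$ for some graph $G$. *)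

theory Defs
  imports Main
begin

definition simple_graph :: "'a set \<Rightarrow> ('a \<Rightarrow> 'a \<Rightarrow> bool) \<Rightarrow> bool" where
  "simple_graph V E \<longleftrightarrow> finite V \<and> (\<forall>u v. E u v \<longrightarrow> u \<in> V \<and> v \<in> V)
     \<and> (\<forall>u v. E u v \<longrightarrow> E v u) \<and> (\<forall>v. \<not> E v v)"

definition complete_graph :: "'a set \<Rightarrow> ('a \<Rightarrow> 'a \<Rightarrow> bool) \<Rightarrow> bool" where
  "complete_graph V E \<longleftrightarrow> (\<forall>u\<in>V. \<forall>v\<in>V. u \<noteq> v \<longrightarrow> E u v)"

definition universal_vertex :: "'a set \<Rightarrow> ('a \<Rightarrow> 'a \<Rightarrow> bool) \<Rightarrow> 'a \<Rightarrow> bool" where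
  "universal_vertex V E w \<longleftrightarrow> w \<in> V \<and> (\<forall>x\<in>V. x \<noteq> w \<longrightarrow> E w x)"

definition cnbhd :: "'a set \<Rightarrow> ('a \<Rightarrow> 'a \<Rightarrow> bool) \<Rightarrow> 'a \<Rightarrow> 'a set" where
  "cnbhd V E v = {u \<in> V. u = v \<or> E v u}"

definition cnbhd_set :: "'a set \<Rightarrow> ('a \<Rightarrow> 'a \<Rightarrow> bool) \<Rightarrow> 'a set \<Rightarrow> 'a set" where
  "cnbhd_set V E D = (\<Union>v\<in>D. cnbhd V E v)"

definition PN :: "'a set \<Rightarrow> ('a \<Rightarrow> 'a \<Rightarrow> bool) \<Rightarrow> 'a \<Rightarrow> 'a set \<Rightarrow> 'a set" where
  "PN V E v D = cnbhd V E v - cnbhd_set V E (D - {v})"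

definition irredundant :: "'a set \<Rightarrow> ('a \<Rightarrow> 'a \<Rightarrow> bool) \<Rightarrow> 'a set \<Rightarrow> bool" where
  "irredundant V E D \<longleftrightarrow> D \<subseteq> V \<and> (\<forall>v\<in>D. PN V E v D \<noteq> {})"

definition IR :: "'a set \<Rightarrow> ('a \<Rightarrow> 'a \<Rightarrow> bool) \<Rightarrow> nat" where
  "IR V E = Max (card ` {D. irredundant V E D})"

definition IR_sets :: "'a set \<Rightarrow> ('a \<Rightarrow> 'a \<Rightarrow> bool) \<Rightarrow> 'a set set" where
  "IR_sets V E = {D. irredundant V E D \<and> card D = IR V E}"

definition IR_adj :: "'a set \<Rightarrow> ('a \<Rightarrow> 'a \<Rightarrow> bool) \<Rightarrow> 'a set \<Rightarrow> 'a set \<Rightarrow> bool" where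
  "IR_adj V E D D' \<longleftrightarrow> D \<in> IR_sets V E \<and> D' \<in> IR_sets V E \<and>
     (\<exists>u\<in>D. \<exists>v\<in>D'. E u v \<and> D' = (D - {u}) \<union> {v})"

definition graph_iso :: "'a set \<Rightarrow> ('a \<Rightarrow> 'a \<Rightarrow> bool) \<Rightarrow> 'b set \<Rightarrow> ('b \<Rightarrow> 'b \<Rightarrow> bool) \<Rightarrow> bool" where
  "graph_iso V1 E1 V2 E2 \<longleftrightarrow> (\<exists>f. bij_betw f V1 V2 \<and>
     (\<forall>u\<in>V1. \<forall>v\<in>V1. E1 u v \<longleftrightarrow> E2 (f u) (f v)))"

definition IR_graph_over :: "'b itself \<Rightarrow> 'a set \<Rightarrow> ('a \<Rightarrow> 'a \<Rightarrow> bool) \<Rightarrow> bool" where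
  "IR_graph_over _ VH EH \<longleftrightarrow> (\<exists>(VG :: 'b set) EG. simple_graph VG EG \<and>
     graph_iso VH EH (IR_sets VG EG) (IR_adj VG EG))"

end

theory Submission
  imports Defs
begin

(* Let X be an IR-set adjacent in G(IR) to every other IR-set. Then every IR-set has at most one
   vertex outside X; since choosing one private neighbour for every vertex of an IR-set yields
   another IR-set, also at most one vertex of an IR-set has a private neighbour outside X. For a
   neighbour Y = X - {x} \<union> {y} of X this forces y to have no neighbour in X - {x}, and the vertices
   of X - {x} to be isolated in Y. Now take two neighbours X - {x\<^sub>i} \<union> {y\<^sub>i}: if x\<^sub>1 \<noteq> x\<^sub>2,
   then X - {x\<^sub>1, x\<^sub>2} \<union> {y\<^sub>1, y\<^sub>2} is an IR-set with two vertices outside X; if x\<^sub>1 = x\<^sub>2 and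
   y\<^sub>1, y\<^sub>2 are not adjacent, then X - {x\<^sub>1} \<union> {y\<^sub>1, y\<^sub>2} is an independent set larger than IR.
   Hence G(IR) is complete, and so is every graph isomorphic to it. *)

lemma PN_iff:
  "p \<in> PN V E v D \<longleftrightarrow>
     p \<in> V \<and> (p = v \<or> E v p) \<and> (\<forall>d\<in>D. d \<noteq> v \<longrightarrow> p \<noteq> d \<and> \<not> E d p)"
  unfolding PN_def cnbhd_set_def cnbhd_def by auto

lemma self_in_PN_iff: "v \<in> PN V E v D \<longleftrightarrow> v \<in> V \<and> (\<forall>d\<in>D. d \<noteq> v \<longrightarrow> \<not> E d v)"
  by (auto simp: PN_iff)

lemma independent_imp_irredundant:
  assumes "W \<subseteq> V" and "\<forall>a\<in>W. \<forall>b\<in>W. \<not> E a b"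
  shows "irredundant V E W"
  unfolding irredundant_def
proof (intro conjI ballI)
  fix v assume "v \<in> W"
  then have "v \<in> PN V E v W" using assms by (auto simp: self_in_PN_iff)
  then show "PN V E v W \<noteq> {}" by blast
qed (use assms in blast)

lemma finite_irredundant_sets:
  assumes "finite V"
  shows "finite {D. irredundant V E D}"
proof (rule finite_subset)
  show "{D. irredundant V E D} \<subseteq> Pow V" by (auto simp: irredundant_def)
qed (use assms in simp)

lemma card_le_IR:
  assumes "finite V" and "irredundant V E D"
  shows "card D \<le> IR V E"
  unfolding IR_def using assms finite_irredundant_sets by (intro Max_ge) auto

lemma IR_setsI:
  assumes "finite V" and "irredundant V E D" and "IR V E \<le> card D"
  shows "D \<in> IR_sets V E"
  using assms card_le_IR[OF assms(1,2)] by (simp add: IR_sets_def)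

lemma IR_sets_finite:
  assumes "finite V" and "D \<in> IR_sets V E"
  shows "finite D"
  using assms by (auto simp: IR_sets_def irredundant_def intro: finite_subset)

lemma card_swap:
  assumes "finite A" and "a \<in> A" and "b \<notin> A"
  shows "card (A - {a} \<union> {b}) = card A"
  using assms by (simp add: card_Suc_Diff1 del: card_Diff_insert)

lemma IR_sets_swap:
  assumes "finite V" and "D \<in> IR_sets V E" and "a \<in> D" and "b \<notin> D"
    and "irredundant V E (D - {a} \<union> {b})"
  shows "D - {a} \<union> {b} \<in> IR_sets V E"
  using assms card_swap[OF IR_sets_finite[OF assms(1,2)] assms(3,4)]
  by (intro IR_setsI) (auto simp: IR_sets_def)

lemma inj_on_private_neighbours:
  assumes "\<And>d. d \<in> D \<Longrightarrow> f d \<in> PN V E d D"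
  shows "inj_on f D"
proof (rule inj_onI, rule ccontr)
  fix a b assume "a \<in> D" "b \<in> D" "f a = f b" "a \<noteq> b"
  then show False using assms[of a] assms[of b] by (auto simp: PN_iff)
qed

lemma irredundant_private_neighbours:
  assumes "simple_graph V E" and "\<And>d. d \<in> D \<Longrightarrow> f d \<in> PN V E d D"
  shows "irredundant V E (f ` D)"
  unfolding irredundant_def
proof (intro conjI ballI)
  have sym: "E a b \<Longrightarrow> E b a" and in_V: "E a b \<Longrightarrow> a \<in> V" for a b
    using assms(1) by (auto simp: simple_graph_def)
  have f: "f d \<in> V" "f d = d \<or> E d (f d)" "\<And>d'. d' \<in> D \<Longrightarrow> d' \<noteq> d \<Longrightarrow> f d \<noteq> d' \<and> \<not> E d' (f d)"
    if "d \<in> D" for d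
    using assms(2)[OF that] by (auto simp: PN_iff)
  show "f ` D \<subseteq> V" using f(1) by blast
  fix w assume "w \<in> f ` D"
  then obtain d where d: "d \<in> D" "w = f d" by blast
  have "d \<in> PN V E w (f ` D)"
    unfolding PN_iff using f d sym in_V by (metis imageE)
  then show "PN V E w (f ` D) \<noteq> {}" by blast
qed

lemma IR_set_of_private_neighbours:
  assumes "simple_graph V E" and Y: "Y \<in> IR_sets V E"
    and "a \<in> Y" "b \<in> Y" "a \<noteq> b" and pa: "pa \<in> PN V E a Y" and pb: "pb \<in> PN V E b Y"
  obtains W where "W \<in> IR_sets V E" "pa \<in> W" "pb \<in> W" "pa \<noteq> pb"
proof -
  have "\<forall>d\<in>Y. \<exists>p. p \<in> PN V E d Y" using Y by (auto simp: IR_sets_def irredundant_def)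
  then obtain g where g: "\<forall>d\<in>Y. g d \<in> PN V E d Y" by metis
  define f where "f = g(a := pa, b := pb)"
  have f: "f d \<in> PN V E d Y" if "d \<in> Y" for d
    using g that pa pb by (simp add: f_def)
  have inj: "inj_on f Y" using inj_on_private_neighbours f .
  have "f ` Y \<in> IR_sets V E"
    using irredundant_private_neighbours[OF assms(1) f] Y card_image[OF inj]
    by (simp add: IR_sets_def)
  moreover have "pa \<noteq> pb" using inj_onD[OF inj, of a b] assms(3-5) by (auto simp: f_def)
  ultimately show thesis using that assms(3,4,5) by (force simp: f_def)
qed

lemma IR_adjE:
  assumes "simple_graph V E" and "IR_adj V E D D'"
  obtains u v where "u \<in> D" "v \<notin> D" "E u v" "D' = D - {u} \<union> {v}"
proof -
  obtain u v where uv: "u \<in> D" "E u v" "D' = D - {u} \<union> {v}"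
    and IR: "D \<in> IR_sets V E" "D' \<in> IR_sets V E"
    using assms(2) unfolding IR_adj_def by blast
  have "v \<notin> D"
  proof
    assume "v \<in> D"
    moreover have "v \<noteq> u" using uv(2) assms(1) by (auto simp: simple_graph_def)
    ultimately have "D' = D - {u}" using uv by auto
    moreover have "finite D" using IR(1) assms(1) IR_sets_finite by (auto simp: simple_graph_def)
    moreover have "card D' = card D" using IR by (simp add: IR_sets_def)
    ultimately show False using uv(1) card_Diff1_less by fastforce
  qed
  with uv that show thesis by blast
qed

lemma IR_adj_sym:
  assumes "simple_graph V E" and "IR_adj V E D D'"
  shows "IR_adj V E D' D"
proof -
  obtain u v where uv: "u \<in> D" "v \<notin> D" "E u v" "D' = D - {u} \<union> {v}"
    using IR_adjE[OF assms] .
  have "D = D' - {v} \<union> {u}" using uv by auto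
  moreover have "E v u" using uv(3) assms(1) by (simp add: simple_graph_def)
  moreover have "v \<in> D'" "u \<in> D" using uv by auto
  ultimately show ?thesis using assms(2) unfolding IR_adj_def by blast
qed

locale universal_IR_set =
  fixes V :: "'a set" and E :: "'a \<Rightarrow> 'a \<Rightarrow> bool" and X :: "'a set"
  assumes simple: "simple_graph V E"
    and universal: "universal_vertex (IR_sets V E) (IR_adj V E) X"
begin

lemma finite_V: "finite V"
  using simple by (simp add: simple_graph_def)

lemma edge_sym: "E a b \<Longrightarrow> E b a"
  using simple by (simp add: simple_graph_def)

lemma edge_in_V: "E a b \<Longrightarrow> a \<in> V \<and> b \<in> V"
  using simple by (simp add: simple_graph_def)

lemma no_loop: "\<not> E a a"
  using simple by (simp add: simple_graph_def)

lemma IR_adj_X: "W \<in> IR_sets V E \<Longrightarrow> W \<noteq> X \<Longrightarrow> IR_adj V E X W"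
  using universal by (simp add: universal_vertex_def)

lemma IR_set_diff_X_unique:
  assumes "W \<in> IR_sets V E" and "p \<in> W - X" and "q \<in> W - X"
  shows "p = q"
proof -
  have "IR_adj V E X W" using IR_adj_X assms by blast
  then obtain u v where "W = X - {u} \<union> {v}" using IR_adjE[OF simple] by metis
  with assms(2,3) show ?thesis by blast
qed

lemma private_neighbours_outside_X_unique:
  assumes "Y \<in> IR_sets V E" and "a \<in> Y" "b \<in> Y"
    and "pa \<in> PN V E a Y - X" and "pb \<in> PN V E b Y - X"
  shows "a = b"
proof (rule ccontr)
  assume "a \<noteq> b"
  then obtain W where "W \<in> IR_sets V E" "pa \<in> W" "pb \<in> W" "pa \<noteq> pb"
    using IR_set_of_private_neighbours[OF simple assms(1-3)] assms(4,5) by blast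
  with assms(4,5) IR_set_diff_X_unique show False by blast
qed

context
  fixes x y Y
  assumes y_notin_X: "y \<notin> X" and xy: "E x y"
    and Y_eq: "Y = X - {x} \<union> {y}" and Y_IR: "Y \<in> IR_sets V E"
begin

lemma private_neighbour_outside_X:
  assumes r: "r \<in> X - {x}" and "z \<in> Y" "z \<noteq> r" "E z r"
  obtains d where "d \<in> PN V E r Y" "d \<notin> X"
proof -
  have "r \<in> Y" using r Y_eq by blast
  then obtain d where d: "d \<in> PN V E r Y"
    using Y_IR by (auto simp: IR_sets_def irredundant_def)
  then have "d \<noteq> r" using assms(2-4) by (auto simp: PN_iff)
  have "d \<notin> X"
  proof
    assume "d \<in> X"
    show False
    proof (cases "d = x")
      case True
      then have "E y d" using xy edge_sym by blast
      moreover have "y \<noteq> r" using r y_notin_X by blast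
      ultimately show False using d Y_eq by (auto simp: PN_iff)
    next
      case False
      with \<open>d \<in> X\<close> have "d \<in> Y" using Y_eq by blast
      with d \<open>d \<noteq> r\<close> show False by (auto simp: PN_iff)
    qed
  qed
  with d that show thesis by blast
qed

lemma X_non_isolated_in_swapped_unique:
  assumes "r \<in> X - {x}" "s \<in> X - {x}" "z \<in> Y" "z' \<in> Y" "E z r" "E z' s"
  shows "r = s"
proof -
  have "z \<noteq> r" "z' \<noteq> s" using assms(5,6) no_loop by blast+
  then obtain d d' where "d \<in> PN V E r Y - X" "d' \<in> PN V E s Y - X"
    using private_neighbour_outside_X assms by (metis DiffI)
  moreover have "r \<in> Y" "s \<in> Y" using assms(1,2) Y_eq by blast+
  ultimately show ?thesis using private_neighbours_outside_X_unique[OF Y_IR] by blast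
qed

text \<open>A neighbour r of y in X - {x} would have a private neighbour c outside X, and
  Y - {r} \<union> {c} would be an independent IR-set with two vertices y, c outside X.\<close>
lemma swapped_in_not_adjacent_X:
  assumes "r \<in> X - {x}"
  shows "\<not> E y r"
proof
  assume "E y r"
  have "y \<in> Y" "r \<in> Y" using assms Y_eq by auto
  obtain c where c: "c \<in> PN V E r Y" "c \<notin> X"
    using private_neighbour_outside_X[OF assms \<open>y \<in> Y\<close>] assms y_notin_X \<open>E y r\<close> by blast
  have c_priv: "c \<noteq> a \<and> \<not> E a c" if "a \<in> Y" "a \<noteq> r" for a
    using c(1) that by (auto simp: PN_iff)
  have isolated: "\<not> E z s" if "s \<in> X - {x, r}" and "z \<in> Y" for s z
    using X_non_isolated_in_swapped_unique[of s r z y] that assms \<open>y \<in> Y\<close> \<open>E y r\<close> by blast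
  define W where "W = Y - {r} \<union> {c}"
  have "W \<subseteq> V"
    using c(1) Y_IR by (auto simp: W_def PN_iff IR_sets_def irredundant_def)
  moreover have "\<forall>a\<in>W. \<forall>b\<in>W. \<not> E a b"
  proof (intro ballI notI)
    fix a b assume a: "a \<in> W" and b: "b \<in> W" and "E a b"
    then have "a \<noteq> b" "E b a" using no_loop edge_sym by blast+
    have "Y - {r} = X - {x, r} \<union> {y}" using Y_eq assms y_notin_X by auto
    with a b \<open>a \<noteq> b\<close> consider "a = c" "b \<in> Y - {r}" | "b = c" "a \<in> Y - {r}"
      | "a \<in> X - {x, r}" "b \<in> Y" | "b \<in> X - {x, r}" "a \<in> Y"
      unfolding W_def by blast
    then show False
      using c_priv isolated \<open>E a b\<close> \<open>E b a\<close> by cases blast+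
  qed
  ultimately have "irredundant V E W" by (rule independent_imp_irredundant)
  moreover have "c \<notin> Y" using c c_priv[of y] \<open>y \<in> Y\<close> Y_eq assms y_notin_X by blast
  ultimately have "W \<in> IR_sets V E"
    unfolding W_def using IR_sets_swap[OF finite_V Y_IR \<open>r \<in> Y\<close>] by blast
  moreover have "y \<in> W - X" "c \<in> W - X" "y \<noteq> c"
    using c_priv[of y] \<open>y \<in> Y\<close> assms y_notin_X c by (auto simp: W_def)
  ultimately show False using IR_set_diff_X_unique by blast
qed

lemma X_isolated_in_swapped:
  assumes r: "r \<in> X - {x}" and z: "z \<in> Y"
  shows "\<not> E z r"
proof
  assume "E z r"
  then have "z \<noteq> r" using no_loop by blast
  then obtain d where d: "d \<in> PN V E r Y" "d \<notin> X"
    using private_neighbour_outside_X[OF r z] \<open>E z r\<close> by blast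
  have "y \<in> PN V E y Y"
    unfolding self_in_PN_iff
    using edge_in_V[OF xy] swapped_in_not_adjacent_X edge_sym Y_eq by blast
  then have "y = r"
    using private_neighbours_outside_X_unique[OF Y_IR, of y r y d] d y_notin_X r Y_eq by blast
  with r y_notin_X show False by blast
qed

end

lemma swaps_of_same_vertex_adjacent:
  assumes y1: "y1 \<notin> X" and y2: "y2 \<notin> X" and "y1 \<noteq> y2" and "E x y1" "E x y2"
    and Y1: "X - {x} \<union> {y1} \<in> IR_sets V E" and Y2: "X - {x} \<union> {y2} \<in> IR_sets V E"
  shows "E y1 y2"
proof (rule ccontr)
  assume "\<not> E y1 y2"
  define W where "W = insert y2 (X - {x} \<union> {y1})"
  have isolated: "\<not> E z r" if "r \<in> X - {x}" "z \<in> X - {x} \<union> {y1}" for r z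
    using X_isolated_in_swapped[OF y1 \<open>E x y1\<close> refl Y1] that .
  have y2_not_adjacent: "\<not> E y2 r" if "r \<in> X - {x}" for r
    using swapped_in_not_adjacent_X[OF y2 \<open>E x y2\<close> refl Y2] that .
  have "W \<subseteq> V"
    using Y1 edge_in_V[OF \<open>E x y2\<close>] by (auto simp: W_def IR_sets_def irredundant_def)
  moreover have "\<forall>a\<in>W. \<forall>b\<in>W. \<not> E a b"
  proof (intro ballI)
    have from_X: "\<not> E b a" if "a \<in> X - {x}" "b \<in> W" for a b
      using that isolated[of a b] y2_not_adjacent[of a] unfolding W_def by blast
    fix a b assume "a \<in> W" "b \<in> W"
    then consider "a \<in> X - {x}" | "b \<in> X - {x}" | "a \<in> {y1, y2}" "b \<in> {y1, y2}"
      unfolding W_def by blast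
    then show "\<not> E a b"
    proof cases
      case 1
      then show ?thesis using from_X \<open>b \<in> W\<close> edge_sym by blast
    next
      case 2
      then show ?thesis using from_X \<open>a \<in> W\<close> by blast
    next
      case 3
      then show ?thesis using \<open>\<not> E y1 y2\<close> edge_sym no_loop by blast
    qed
  qed
  ultimately have "card W \<le> IR V E"
    using card_le_IR[OF finite_V] independent_imp_irredundant by blast
  moreover have "card W = Suc (IR V E)"
    using Y1 IR_sets_finite[OF finite_V Y1] y2 \<open>y1 \<noteq> y2\<close>
    by (simp add: W_def IR_sets_def)
  ultimately show False by simp
qed

lemma removed_vertex_private_in_double_swap:
  assumes x1: "x1 \<in> X" and "x1 \<noteq> x2" and y1: "y1 \<notin> X" and y2: "y2 \<notin> X"
    and "E x1 y1" and "E x2 y2" and Y2: "X - {x2} \<union> {y2} \<in> IR_sets V E"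
  shows "x1 \<in> PN V E y1 (X - {x1, x2} \<union> {y1, y2})"
proof -
  have "x1 \<in> X - {x2}" using x1 \<open>x1 \<noteq> x2\<close> by blast
  have "\<not> E d x1" if "d \<in> X - {x1, x2}" for d
    using X_isolated_in_swapped[OF y2 \<open>E x2 y2\<close> refl Y2, of d x1] that \<open>x1 \<in> X - {x2}\<close> edge_sym
    by blast
  moreover have "\<not> E y2 x1"
    using swapped_in_not_adjacent_X[OF y2 \<open>E x2 y2\<close> refl Y2] \<open>x1 \<in> X - {x2}\<close> .
  ultimately show ?thesis
    unfolding PN_iff using edge_in_V[OF \<open>E x1 y1\<close>] edge_sym[OF \<open>E x1 y1\<close>] x1 y1 y2 by blast
qed

lemma double_swap_irredundant:
  assumes x1: "x1 \<in> X" and x2: "x2 \<in> X" and "x1 \<noteq> x2" and y1: "y1 \<notin> X" and y2: "y2 \<notin> X"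
    and "E x1 y1" "E x2 y2"
    and Y1: "X - {x1} \<union> {y1} \<in> IR_sets V E" and Y2: "X - {x2} \<union> {y2} \<in> IR_sets V E"
  shows "irredundant V E (X - {x1, x2} \<union> {y1, y2})" (is "irredundant V E ?W")
proof -
  have "?W \<subseteq> V"
    using Y1 edge_in_V[OF \<open>E x2 y2\<close>] by (auto simp: IR_sets_def irredundant_def)
  moreover have "PN V E w ?W \<noteq> {}" if "w \<in> ?W" for w
  proof -
    consider "w \<in> X - {x1, x2}" | "w = y1" | "w = y2" using \<open>w \<in> ?W\<close> by blast
    then show ?thesis
    proof cases
      case 1
      have "\<not> E d w" if "d \<in> ?W" "d \<noteq> w" for d
      proof (cases "d = y2")
        case True
        then show ?thesis
          using swapped_in_not_adjacent_X[OF y2 \<open>E x2 y2\<close> refl Y2, of w] 1 edge_sym by blast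
      next
        case False
        then show ?thesis
          using X_isolated_in_swapped[OF y1 \<open>E x1 y1\<close> refl Y1, of w d] 1 that by blast
      qed
      then have "w \<in> PN V E w ?W" using 1 \<open>?W \<subseteq> V\<close> that by (auto simp: self_in_PN_iff)
      then show ?thesis by blast
    next
      case 2
      then show ?thesis
        using removed_vertex_private_in_double_swap[OF x1 \<open>x1 \<noteq> x2\<close> y1 y2 \<open>E x1 y1\<close> \<open>E x2 y2\<close> Y2]
        by blast
    next
      case 3
      have "?W = X - {x2, x1} \<union> {y2, y1}" by blast
      then show ?thesis
        using removed_vertex_private_in_double_swap[OF x2 _ y2 y1 \<open>E x2 y2\<close> \<open>E x1 y1\<close> Y1]
          \<open>x1 \<noteq> x2\<close> 3 by auto
    qed
  qed
  ultimately show ?thesis by (simp add: irredundant_def)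
qed

lemma swaps_remove_same_vertex:
  assumes x1: "x1 \<in> X" and x2: "x2 \<in> X" and y1: "y1 \<notin> X" and y2: "y2 \<notin> X"
    and "E x1 y1" "E x2 y2"
    and Y1: "X - {x1} \<union> {y1} \<in> IR_sets V E" and Y2: "X - {x2} \<union> {y2} \<in> IR_sets V E"
  shows "x1 = x2"
proof (rule ccontr)
  assume "x1 \<noteq> x2"
  then have "x2 \<in> X - {x1}" using x2 by blast
  have "y1 \<noteq> y2"
    using swapped_in_not_adjacent_X[OF y1 \<open>E x1 y1\<close> refl Y1 \<open>x2 \<in> X - {x1}\<close>] \<open>E x2 y2\<close> edge_sym
    by blast
  define W where "W = X - {x1, x2} \<union> {y1, y2}"
  have "W = (X - {x1} \<union> {y1}) - {x2} \<union> {y2}"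
    using \<open>x2 \<in> X - {x1}\<close> y1 unfolding W_def by auto
  moreover have "irredundant V E W"
    unfolding W_def using double_swap_irredundant assms \<open>x1 \<noteq> x2\<close> by blast
  moreover have "x2 \<in> X - {x1} \<union> {y1}" "y2 \<notin> X - {x1} \<union> {y1}"
    using \<open>x2 \<in> X - {x1}\<close> y2 \<open>y1 \<noteq> y2\<close> by blast+
  ultimately have "W \<in> IR_sets V E" using IR_sets_swap[OF finite_V Y1] by metis
  moreover have "y1 \<in> W - X" "y2 \<in> W - X" using y1 y2 by (auto simp: W_def)
  ultimately show False using IR_set_diff_X_unique \<open>y1 \<noteq> y2\<close> by blast
qed

lemma complete_IR_graph: "complete_graph (IR_sets V E) (IR_adj V E)"
  unfolding complete_graph_def
proof (intro ballI impI)
  fix Y Z assume Y: "Y \<in> IR_sets V E" and Z: "Z \<in> IR_sets V E" and "Y \<noteq> Z"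
  consider "Y = X" | "Z = X" | "Y \<noteq> X" "Z \<noteq> X" by blast
  then show "IR_adj V E Y Z"
  proof cases
    case 1
    then show ?thesis using IR_adj_X Z \<open>Y \<noteq> Z\<close> by blast
  next
    case 2
    then show ?thesis using IR_adj_X Y \<open>Y \<noteq> Z\<close> IR_adj_sym[OF simple] by blast
  next
    case 3
    obtain x1 y1 where x1: "x1 \<in> X" "y1 \<notin> X" "E x1 y1" and Y_eq: "Y = X - {x1} \<union> {y1}"
      using IR_adjE[OF simple IR_adj_X[OF Y 3(1)]] .
    obtain x2 y2 where x2: "x2 \<in> X" "y2 \<notin> X" "E x2 y2" and Z_eq: "Z = X - {x2} \<union> {y2}"
      using IR_adjE[OF simple IR_adj_X[OF Z 3(2)]] .
    have "x1 = x2"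
      using swaps_remove_same_vertex x1 x2 Y Z Y_eq Z_eq by blast
    then have "y1 \<noteq> y2" using Y_eq Z_eq \<open>Y \<noteq> Z\<close> by blast
    then have "E y1 y2"
      using swaps_of_same_vertex_adjacent x1 x2 Y Z Y_eq Z_eq \<open>x1 = x2\<close> by blast
    moreover have "Z = Y - {y1} \<union> {y2}" "y1 \<in> Y" "y2 \<in> Z"
      using Y_eq Z_eq \<open>x1 = x2\<close> x1(2) by auto
    ultimately show ?thesis using Y Z unfolding IR_adj_def by blast
  qed
qed

end

lemma graph_iso_universal_vertex:
  assumes "graph_iso V1 E1 V2 E2" and "universal_vertex V1 E1 w"
  obtains w' where "universal_vertex V2 E2 w'"
proof -
  obtain f where f: "bij_betw f V1 V2" and E: "\<forall>u\<in>V1. \<forall>v\<in>V1. E1 u v \<longleftrightarrow> E2 (f u) (f v)"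
    using assms(1) unfolding graph_iso_def by blast
  have w: "w \<in> V1" "\<And>u. u \<in> V1 \<Longrightarrow> u \<noteq> w \<Longrightarrow> E1 w u"
    using assms(2) unfolding universal_vertex_def by auto
  have "E2 (f w) x" if "x \<in> V2" "x \<noteq> f w" for x
  proof -
    obtain u where "u \<in> V1" "x = f u" using f \<open>x \<in> V2\<close> by (metis bij_betw_imp_surj_on imageE)
    then show ?thesis using w E that by blast
  qed
  moreover have "f w \<in> V2" using f w(1) bij_betwE by blast
  ultimately have "universal_vertex V2 E2 (f w)" by (simp add: universal_vertex_def)
  then show thesis by (rule that)
qed

lemma graph_iso_complete_graph:
  assumes "graph_iso V1 E1 V2 E2" and "complete_graph V2 E2"
  shows "complete_graph V1 E1"
  unfolding complete_graph_def
proof (intro ballI impI)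
  obtain f where f: "bij_betw f V1 V2" and E: "\<forall>u\<in>V1. \<forall>v\<in>V1. E1 u v \<longleftrightarrow> E2 (f u) (f v)"
    using assms(1) unfolding graph_iso_def by blast
  fix u v assume "u \<in> V1" "v \<in> V1" "u \<noteq> v"
  then have "f u \<in> V2" "f v \<in> V2" "f u \<noteq> f v"
    using f by (auto simp: bij_betw_def inj_on_def)
  then show "E1 u v"
    using assms(2) E \<open>u \<in> V1\<close> \<open>v \<in> V1\<close> unfolding complete_graph_def by blast
qed

theorem proposition4p7:
  fixes VH :: "'a set" and EH :: "'a \<Rightarrow> 'a \<Rightarrow> bool"
  assumes "simple_graph VH EH"
    and "\<not> complete_graph VH EH"
    and "\<exists>w. universal_vertex VH EH w"
  shows "\<not> IR_graph_over TYPE('b) VH EH"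
proof
  assume "IR_graph_over TYPE('b) VH EH"
  then obtain VG :: "'b set" and EG where G: "simple_graph VG EG"
    and iso: "graph_iso VH EH (IR_sets VG EG) (IR_adj VG EG)"
    unfolding IR_graph_over_def by blast
  obtain X where "universal_vertex (IR_sets VG EG) (IR_adj VG EG) X"
    using assms(3) graph_iso_universal_vertex[OF iso] by blast
  with G have "complete_graph (IR_sets VG EG) (IR_adj VG EG)"
    by (intro universal_IR_set.complete_IR_graph universal_IR_set.intro)
  then have "complete_graph VH EH" using iso graph_iso_complete_graph by blast
  with assms(2) show False ..
qed

end
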